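(* Consider the discrete-time linear Gaussian state-space model on time steps $k=1,2,\ldots,T$ (where $T=N+M$, with $N$ steps carrying an observation and $M$ steps with missing observation, in any order): $$\mathbf{x}_1 \sim \mathcal{N}(\mathbf{0},\mathbf{P}_\infty),\qquad \mathbf{x}_k = \mathbf{F}_{k-1}\mathbf{x}_{k-1} + \mathbf{q}_{k-1},\ \ \mathbf{q}_{k-1}\sim\mathcal{N}(\mathbf{0},\mathbf{Q}_{k-1})\ (k\ge 2),$$ $$y_k = \mathbf{H}\mathbf{x}_k + e_k,\quad e_k\sim\mathcal{N}(0,\sigma_k^2)\quad\text{for each observed step }k,$$ where $\mathbf{x}_k\in\mathbb{R}^{n_x}$, $\mathbf{H}\in\mathbb{R}^{1\times n_x}$, $\mathbf{P}_\infty,\mathbf{Q}_{k-1}$ are symmetric positive semidefinite, $\sigma_k^2>0$, and all noises are mutually independent and independent of $\mathbf{x}_1$. For each $k$ define an element $a_k=(\mathbf{A}_k,\mathbf{b}_k,\mathbf{C}_k,\boldsymbol{\eta}_k,\mathbf{J}_k)$ as follows. - If step $k$ has no observation: for $k>1$, $\mathbf{A}_k=\mathbf{F}_{k-1}$, $\mathbf{b}_k=\mathbf{0}$, $\mathbf{C}_k=\mathbf{Q}_{k-1}$; for $k=1$, $\mathbf{A}_1=\mathbf{0}$, $\mathbf{b}_1=\mathbf{0}$, $\mathbf{C}_1=\mathbf{P}_\infty$; and in both cases $\boldsymbol{\eta}_k=\mathbf{0}$, $\mathbf{J}_k=\mathbf{0}$. - If step $k>1$ has an observation: with $S_k=\mathbf{H}\mathbf{Q}_{k-1}\mathbf{H}^\top+\sigma_k^2$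 and $\mathbf{K}_k=\mathbf{Q}_{k-1}\mathbf{H}^\top S_k^{-1}$, set $\mathbf{A}_k=(\mathbf{I}-\mathbf{K}_k\mathbf{H})\mathbf{F}_{k-1}$, $\mathbf{b}_k=\mathbf{K}_k y_k$, $\mathbf{C}_k=(\mathbf{I}-\mathbf{K}_k\mathbf{H})\mathbf{Q}_{k-1}$, $\boldsymbol{\eta}_k=\mathbf{F}_{k-1}^\top\mathbf{H}^\top S_k^{-1}y_k$, $\mathbf{J}_k=\mathbf{F}_{k-1}^\top\mathbf{H}^\top S_k^{-1}\mathbf{H}\mathbf{F}_{k-1}$. - If step $k=1$ has an observation: with $S_1=\mathbf{H}\mathbf{P}_\infty\mathbf{H}^\top+\sigma_1^2$ and $\mathbf{K}_1=\mathbf{P}_\infty\mathbf{H}^\top S_1^{-1}$, set $\mathbf{A}_1=\mathbf{0}$, $\mathbf{b}_1=\mathbf{K}_1y_1$, $\mathbf{C}_1=\mathbf{P}_\infty-\mathbf{K}_1S_1\mathbf{K}_1^\top$, $\boldsymbol{\eta}_1=\mathbf{0}$, $\mathbf{J}_1=\mathbf{0}$. Define the binary operator $a_i\otimes a_j=(\mathbf{A}_{ij},\mathbf{b}_{ij},\mathbf{C}_{ij},\boldsymbol{\eta}_{ij},\mathbf{J}_{ij})$ by $$\mathbf{A}_{ij}=\mathbf{A}_j(\mathbf{I}+\mathbf{C}_i\mathbf{J}_j)^{-1}\mathbf{A}_i,\quad \mathbf{b}_{ij}=\mathbf{A}_j(\mathbf{I}+\mathbf{C}_i\mathbf{J}_j)^{-1}(\mathbf{b}_i+\mathbf{C}_i\boldsymbol{\eta}_j)+\mathbf{b}_j,$$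 $$\mathbf{C}_{ij}=\mathbf{A}_j(\mathbf{I}+\mathbf{C}_i\mathbf{J}_j)^{-1}\mathbf{C}_i\mathbf{A}_j^\top+\mathbf{C}_j,\quad \boldsymbol{\eta}_{ij}=\mathbf{A}_i^\top(\mathbf{I}+\mathbf{J}_j\mathbf{C}_i)^{-1}(\boldsymbol{\eta}_j-\mathbf{J}_j\mathbf{b}_i)+\boldsymbol{\eta}_i,$$ $$\mathbf{J}_{ij}=\mathbf{A}_i^\top(\mathbf{I}+\mathbf{J}_j\mathbf{C}_i)^{-1}\mathbf{J}_j\mathbf{A}_i+\mathbf{J}_i,$$ and the prefix elements $a_1^*=a_1$, $a_k^*=a_{k-1}^*\otimes a_k$ for $k\ge2$, writing $a_k^*=(\mathbf{A}^*_k,\mathbf{b}^*_k,\mathbf{C}^*_k,\boldsymbol{\eta}^*_k,\mathbf{J}^*_k)$. Then for all $k=1,\ldots,N+M$, the Kalman filter mean $\overline{\mathbf{x}}_k=\mathbb{E}[\mathbf{x}_k\mid \text{observations } y_j \text{ at observed steps } j\le k]$ and covariance $\mathbf{P}_k=\mathrm{Cov}[\mathbf{x}_k\mid \text{same observations}]$ satisfy $\overline{\mathbf{x}}_k=\mathbf{b}^*_k$ and $\mathbf{P}_k=\mathbf{C}^*_k$.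
   Context: This arises from a Gaussian process regression problem in state-space form: a continuous-time linear SDE $d\mathbf{x}(t)/dt=\mathbf{G}\mathbf{x}(t)+\mathbf{L}\mathbf{w}(t)$ with $f(t)=\mathbf{H}\mathbf{x}(t)$ started from its stationary covariance $\mathbf{P}_\infty$, discretized at the sorted union of training times (observed) and prediction times (treated as missing observations), giving transition matrices $\mathbf{F}_{k-1}$ and process noise covariances $\mathbf{Q}_{k-1}$. The sequential Kalman filter for this model performs, at each step, a prediction through the transition (for $k\ge2$) and a measurement update only at steps with an observation (no update at missing steps). The matrices $\mathbf{I}+\mathbf{C}_i\mathbf{J}_j$ arising in the operator are assumed invertible (they are, since the $\mathbf{C}$ and $\mathbf{J}$ components are positive semidefinite). The operator $\otimes$ is associative, so the prefix elements can be computed by a parallel scan. *)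

theory Defs
  imports "HOL-Analysis.Analysis"
begin

(* Matrices are real^'n^'n, state vectors real^'n, the 1 x n_x matrix H is
   represented by the vector H :: real^'n (so H x = H \<bullet> x). *)

definition outer :: "real^('n::finite) \<Rightarrow> real^'n \<Rightarrow> real^'n^'n" where
  "outer u v = (\<chi> i j. u $ i * v $ j)"

definition psd :: "real^('n::finite)^'n \<Rightarrow> bool" where
  "psd M \<longleftrightarrow> transpose M = M \<and> (\<forall>x. 0 \<le> x \<bullet> (M *v x))"

type_synonym 'n elem = "(real^'n^'n) \<times> (real^'n) \<times> (real^'n^'n) \<times> (real^'n) \<times> (real^'n^'n)"

(* Parameters: Pinf, F, Q (F j, Q j = F_j, Q_j, used as F_(k-1), Q_(k-1)),
   H, obs (obs k: step k carries an observation), y (y k = y_k), s2 (s2 k = sigma_k^2). *)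
definition elem ::
  "real^('n::finite)^'n \<Rightarrow> (nat \<Rightarrow> real^'n^'n) \<Rightarrow> (nat \<Rightarrow> real^'n^'n) \<Rightarrow> real^'n
   \<Rightarrow> (nat \<Rightarrow> bool) \<Rightarrow> (nat \<Rightarrow> real) \<Rightarrow> (nat \<Rightarrow> real) \<Rightarrow> nat \<Rightarrow> 'n elem" where
  "elem Pinf F Q H obs y s2 k =
    (if \<not> obs k then
       (if k = 1 then (0, 0, Pinf, 0, 0)
        else (F (k-1), 0, Q (k-1), 0, 0))
     else if k = 1 then
       (let S = H \<bullet> (Pinf *v H) + s2 1;
            K = (1 / S) *\<^sub>R (Pinf *v H)
        in (0, y 1 *\<^sub>R K, Pinf - S *\<^sub>R outer K K, 0, 0))
     else
       (let S = H \<bullet> (Q (k-1) *v H) + s2 k;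
            K = (1 / S) *\<^sub>R (Q (k-1) *v H);
            G = transpose (F (k-1)) *v H
        in ((mat 1 - outer K H) ** F (k-1),
            y k *\<^sub>R K,
            (mat 1 - outer K H) ** Q (k-1),
            (y k / S) *\<^sub>R G,
            (1 / S) *\<^sub>R outer G G)))"

definition comb :: "('n::finite) elem \<Rightarrow> 'n elem \<Rightarrow> 'n elem" where
  "comb ai aj =
    (case ai of (Ai, bi, Ci, ei, Ji) \<Rightarrow>
     case aj of (Aj, bj, Cj, ej, Jj) \<Rightarrow>
      (let W = matrix_inv (mat 1 + Ci ** Jj);
           V = matrix_inv (mat 1 + Jj ** Ci)
       in (Aj ** W ** Ai,
           Aj *v (W *v (bi + Ci *v ej)) + bj,
           Aj ** W ** Ci ** transpose Aj + Cj,
           transpose Ai *v (V *v (ej - Jj *v bi)) + ei,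
           transpose Ai ** V ** Jj ** Ai + Ji)))"

(* Prefix elements a*_1 = a_1, a*_k = a*_(k-1) \<otimes> a_k (index 0 unused). *)
fun prefix ::
  "real^('n::finite)^'n \<Rightarrow> (nat \<Rightarrow> real^'n^'n) \<Rightarrow> (nat \<Rightarrow> real^'n^'n) \<Rightarrow> real^'n
   \<Rightarrow> (nat \<Rightarrow> bool) \<Rightarrow> (nat \<Rightarrow> real) \<Rightarrow> (nat \<Rightarrow> real) \<Rightarrow> nat \<Rightarrow> 'n elem" where
  "prefix Pinf F Q H obs y s2 0 = elem Pinf F Q H obs y s2 1"
| "prefix Pinf F Q H obs y s2 (Suc 0) = elem Pinf F Q H obs y s2 1"
| "prefix Pinf F Q H obs y s2 (Suc (Suc k)) =
     comb (prefix Pinf F Q H obs y s2 (Suc k)) (elem Pinf F Q H obs y s2 (Suc (Suc k)))"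

definition kf_update ::
  "real^('n::finite) \<Rightarrow> (nat \<Rightarrow> bool) \<Rightarrow> (nat \<Rightarrow> real) \<Rightarrow> (nat \<Rightarrow> real) \<Rightarrow> nat
   \<Rightarrow> (real^'n) \<times> (real^'n^'n) \<Rightarrow> (real^'n) \<times> (real^'n^'n)" where
  "kf_update H obs y s2 k mp =
    (case mp of (m, P) \<Rightarrow>
      if obs k then
        (let S = H \<bullet> (P *v H) + s2 k;
             K = (1 / S) *\<^sub>R (P *v H)
         in (m + (y k - H \<bullet> m) *\<^sub>R K, P - S *\<^sub>R outer K K))
      else (m, P))"

(* Kalman filter: kalman ... k = (filter mean xbar_k, filter covariance P_k), k \<ge> 1.
   Step 1 starts from the prior (0, Pinf); step k \<ge> 2 predicts through F_(k-1), Q_(k-1). *)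
fun kalman ::
  "real^('n::finite)^'n \<Rightarrow> (nat \<Rightarrow> real^'n^'n) \<Rightarrow> (nat \<Rightarrow> real^'n^'n) \<Rightarrow> real^'n
   \<Rightarrow> (nat \<Rightarrow> bool) \<Rightarrow> (nat \<Rightarrow> real) \<Rightarrow> (nat \<Rightarrow> real) \<Rightarrow> nat \<Rightarrow> (real^'n) \<times> (real^'n^'n)" where
  "kalman Pinf F Q H obs y s2 0 = (0, Pinf)"
| "kalman Pinf F Q H obs y s2 (Suc k) =
     kf_update H obs y s2 (Suc k)
       (if k = 0 then (0, Pinf)
        else (case kalman Pinf F Q H obs y s2 k of (m, P) \<Rightarrow>
                (F k *v m, F k ** P ** transpose (F k) + Q k)))"

end

theory Submission
  imports Defs
begin

(* Every prefix element has A* = 0: A_1 = 0, and the A-component of a \<otimes> a' is a right multiple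
   of the A-component of a. Hence combining a prefix (0, b, C, eta, J) with a_k ignores eta and J
   (which therefore stay 0) and involves only the filter pair (b, C) and the matrix W = (I + C J_k)^-1.
   For an unobserved step J_k = 0 and the combination is exactly the Kalman prediction. For an
   observed step J_k has rank one, so W is given by the Sherman-Morrison formula; W pushes through
   F_(k-1), and the resulting gain composes with the gain K_k of a_k into the Kalman gain of the
   predicted covariance, which turns the combination into prediction followed by the measurement
   update. Positive semidefiniteness of the filter covariances is carried along the induction to
   keep all innovation variances positive. *)

lemma outer_matrix_vector_mult [simp]: "outer u v *v x = (v \<bullet> x) *\<^sub>R u"
  by (simp add: outer_def matrix_vector_mult_def vec_eq_iff inner_vec_def sum_distrib_left mult_ac)

lemma transpose_outer: "transpose (outer u v) = outer v u"
  by (simp add: outer_def transpose_def vec_eq_iff)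

lemma outer_scaleR_left: "outer (c *\<^sub>R u) v = c *\<^sub>R outer u v"
  by (simp add: outer_def vec_eq_iff)

lemma matrix_mul_outer: "A ** outer u v = outer (A *v u) v"
  by (simp add: matrix_eq matrix_vector_mul_assoc[symmetric] matrix_vector_mult_scaleR)

lemma transpose_diff: "transpose (A - B) = transpose A - transpose B"
  by (simp add: transpose_def vec_eq_iff)

lemma transpose_add: "transpose (A + B) = transpose A + transpose B"
  by (simp add: transpose_def vec_eq_iff)

lemma inner_matrix_vector_sym:
  fixes A :: "real^'n^'n"
  assumes "transpose A = A"
  shows "x \<bullet> (A *v y) = (A *v x) \<bullet> y"
  by (metis assms dot_lmul_matrix transpose_matrix_vector)

lemma matrix_inv_unique:
  fixes A B :: "real^'n^'n"
  assumes "A ** B = mat 1"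
  shows "matrix_inv A = B"
proof -
  have "B ** A = mat 1"
    using assms matrix_left_right_inverse by blast
  then have inv: "A ** matrix_inv A = mat 1 \<and> matrix_inv A ** A = mat 1"
    using assms unfolding matrix_inv_def by (metis (mono_tags, lifting) someI)
  have "matrix_inv A = matrix_inv A ** (A ** B)"
    using assms by simp
  also have "\<dots> = B"
    using inv by (simp add: matrix_mul_assoc)
  finally show ?thesis .
qed

lemma matrix_inv_mat_1: "matrix_inv (mat 1 :: real^'n^'n) = mat 1"
  by (rule matrix_inv_unique) simp

lemma matrix_inv_rank_one_update:
  fixes u g :: "real^'n"
  assumes "1 + g \<bullet> u \<noteq> 0"
  shows "matrix_inv (mat 1 + outer u g) = mat 1 - (1 / (1 + g \<bullet> u)) *\<^sub>R outer u g"
proof (rule matrix_inv_unique, unfold matrix_eq, intro allI)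
  fix x
  define d where "d = 1 + g \<bullet> u"
  have "((mat 1 + outer u g) ** (mat 1 - (1 / d) *\<^sub>R outer u g)) *v x
      = x + (g \<bullet> x - (g \<bullet> x) * (1 + g \<bullet> u) / d) *\<^sub>R u"
    by (simp add: matrix_vector_mul_assoc[symmetric] scaleR_matrix_vector_assoc[symmetric]
        inner_diff_right algebra_simps diff_divide_distrib add_divide_distrib)
  also have "\<dots> = x"
    using assms by (simp add: d_def)
  finally show "((mat 1 + outer u g) ** (mat 1 - (1 / (1 + g \<bullet> u)) *\<^sub>R outer u g)) *v x = mat 1 *v x"
    by (simp add: d_def)
qed

lemma psd_congruence_add:
  fixes P :: "real^'n^'n" and Q :: "real^'m^'m" and F :: "real^'n^'m"
  assumes "psd P" "psd Q"
  shows "psd (F ** P ** transpose F + Q)"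
  unfolding psd_def
proof (intro conjI allI)
  show "transpose (F ** P ** transpose F + Q) = F ** P ** transpose F + Q"
    using assms by (simp add: psd_def transpose_add matrix_transpose_mul matrix_mul_assoc)
  fix x :: "real^'m"
  have "x \<bullet> ((F ** P ** transpose F) *v x) = (x v* F) \<bullet> (P *v (x v* F))"
    by (simp add: matrix_vector_mul_assoc[symmetric] dot_lmul_matrix[symmetric])
  then show "0 \<le> x \<bullet> ((F ** P ** transpose F + Q) *v x)"
    using assms by (simp add: psd_def matrix_vector_mult_add_rdistrib inner_add_right)
qed

lemma psd_kalman_update:
  fixes P :: "real^'n^'n" and H :: "real^'n"
  assumes "psd P" "s > 0"
  defines "S \<equiv> H \<bullet> (P *v H) + s"
  defines "K \<equiv> (1 / S) *\<^sub>R (P *v H)"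
  shows "psd (P - S *\<^sub>R outer K K)"
  unfolding psd_def
proof (intro conjI allI)
  have sym: "transpose P = P"
    using assms(1) by (simp add: psd_def)
  then show "transpose (P - S *\<^sub>R outer K K) = P - S *\<^sub>R outer K K"
    by (simp add: transpose_diff transpose_scalar transpose_outer)
  have S_pos: "S > 0"
    using assms(1,2) by (simp add: S_def psd_def add_nonneg_pos)
  fix x :: "real^'n"
  define a where "a = x \<bullet> (P *v x)"
  define b where "b = H \<bullet> (P *v x)"
  define c where "c = H \<bullet> (P *v H)"
  define t where "t = b / S"
  have c: "c = S - s"
    by (simp add: c_def S_def)
  have bx: "x \<bullet> (P *v H) = b"
    using inner_matrix_vector_sym[OF sym, of x H] by (simp add: b_def inner_commute)
  (* Cauchy-Schwarz for the form of P, evaluated at x - (b / S) H *)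
  have "0 \<le> (x - t *\<^sub>R H) \<bullet> (P *v (x - t *\<^sub>R H))"
    using assms(1) by (simp add: psd_def)
  also have "\<dots> = a - 2 * t * b + t * t * c"
    using bx by (simp add: a_def b_def c_def matrix_vector_mult_diff_distrib matrix_vector_mult_scaleR
        inner_diff_left inner_diff_right algebra_simps)
  also have "\<dots> = a - b * b / S - b * b * s / (S * S)"
    using S_pos by (simp add: t_def c field_simps)
  finally have "0 \<le> a - b * b / S - b * b * s / (S * S)" .
  moreover have "0 \<le> b * b * s / (S * S)"
    using assms(2) by simp
  ultimately have "b * b / S \<le> a"
    by linarith
  moreover have "x \<bullet> ((P - S *\<^sub>R outer K K) *v x) = a - b * b / S"
    using S_pos bx
    by (simp add: a_def K_def matrix_vector_mult_diff_rdistrib scaleR_matrix_vector_assoc[symmetric]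
        inner_diff_right inner_commute[of x "P *v H"] power2_eq_square)
  ultimately show "0 \<le> x \<bullet> ((P - S *\<^sub>R outer K K) *v x)"
    by simp
qed

lemma kalman_gain_composition:
  fixes M Q :: "real^'n^'n" and H :: "real^'n" and s :: real
  defines "S \<equiv> H \<bullet> (Q *v H) + s" and "S' \<equiv> H \<bullet> ((M + Q) *v H) + s"
  defines "K \<equiv> (1 / S) *\<^sub>R (Q *v H)" and "K' \<equiv> (1 / S') *\<^sub>R ((M + Q) *v H)"
  assumes "S \<noteq> 0" "S' \<noteq> 0"
  shows "(mat 1 - outer K H) ** (mat 1 - (1 / S') *\<^sub>R outer (M *v H) H) = mat 1 - outer K' H"
proof -
  define c where "c = H \<bullet> (M *v H)"
  have S': "S' = S + c"
    by (simp add: S'_def S_def c_def matrix_vector_mult_add_rdistrib inner_add_right)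
  show ?thesis
    unfolding matrix_eq using assms(5,6) unfolding S' K'_def K_def
    by (simp add: matrix_vector_mul_assoc[symmetric] scaleR_matrix_vector_assoc[symmetric]
        matrix_vector_mult_diff_rdistrib matrix_vector_mult_add_rdistrib inner_diff_right
        c_def[symmetric] vec_eq_iff field_simps)
qed

lemma kalman_mean_composition:
  fixes M Q :: "real^'n^'n" and H m :: "real^'n" and s y :: real
  defines "S \<equiv> H \<bullet> (Q *v H) + s" and "S' \<equiv> H \<bullet> ((M + Q) *v H) + s"
  defines "K \<equiv> (1 / S) *\<^sub>R (Q *v H)" and "K' \<equiv> (1 / S') *\<^sub>R ((M + Q) *v H)"
  assumes "S \<noteq> 0" "S' \<noteq> 0"
  shows "(mat 1 - outer K' H) *v (m + (y / S) *\<^sub>R (M *v H)) + y *\<^sub>R K = m + (y - H \<bullet> m) *\<^sub>R K'"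
proof -
  define v where "v = M *v H"
  define q where "q = Q *v H"
  define c where "c = H \<bullet> v"
  have S': "S' = S + c"
    by (simp add: S'_def S_def c_def v_def matrix_vector_mult_add_rdistrib inner_add_right)
  have vq: "v + q = S' *\<^sub>R K'"
    using assms(6) by (simp add: K'_def v_def q_def matrix_vector_mult_add_rdistrib)
  have "(mat 1 - outer K' H) *v (m + (y / S) *\<^sub>R (M *v H)) + y *\<^sub>R K
      = m + (y / S) *\<^sub>R (v + q) - (H \<bullet> m + y / S * c) *\<^sub>R K'"
    by (simp add: K_def matrix_vector_mult_diff_rdistrib inner_add_right c_def v_def q_def algebra_simps)
  also have "\<dots> = m + (y / S * S' - (H \<bullet> m + y / S * c)) *\<^sub>R K'"
    by (simp add: vq scaleR_diff_left)
  also have "y / S * S' - (H \<bullet> m + y / S * c) = y - H \<bullet> m"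
    using assms(5) by (simp add: S' field_simps)
  finally show ?thesis .
qed

lemma kalman_covariance_composition:
  fixes M Q :: "real^'n^'n" and H :: "real^'n" and s :: real
  defines "S \<equiv> H \<bullet> (Q *v H) + s" and "S' \<equiv> H \<bullet> ((M + Q) *v H) + s"
  defines "K \<equiv> (1 / S) *\<^sub>R (Q *v H)" and "K' \<equiv> (1 / S') *\<^sub>R ((M + Q) *v H)"
  assumes "transpose M = M" "transpose Q = Q" "S \<noteq> 0" "S' \<noteq> 0"
  shows "(mat 1 - outer K' H) ** M ** transpose (mat 1 - outer K H) + (mat 1 - outer K H) ** Q
    = M + Q - S' *\<^sub>R outer K' K'"
  unfolding matrix_eq
proof
  fix x
  define v where "v = M *v H"
  define q where "q = Q *v H"
  define c where "c = H \<bullet> v"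
  have c: "c = S' - S"
    by (simp add: S'_def S_def c_def v_def matrix_vector_mult_add_rdistrib inner_add_right)
  have K: "K = (1 / S) *\<^sub>R q" and K': "K' = (1 / S') *\<^sub>R (v + q)"
    by (simp_all add: K_def K'_def q_def v_def matrix_vector_mult_add_rdistrib)
  have HMx: "H \<bullet> (M *v x) = v \<bullet> x" and HQx: "H \<bullet> (Q *v x) = q \<bullet> x"
    using inner_matrix_vector_sym assms(5,6) by (auto simp: v_def q_def)
  define a where "a = (q \<bullet> x) / S"
  define b where "b = (v \<bullet> x - a * c) / S'"
  have Kx: "K \<bullet> x = a"
    by (simp add: K a_def)
  have aq: "(q \<bullet> x) *\<^sub>R K = a *\<^sub>R q"
    and bvq: "(v \<bullet> x - a * c) *\<^sub>R K' = b *\<^sub>R (v + q)"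
    by (simp_all add: K K' a_def b_def)
  have ab: "a + b = (v \<bullet> x + q \<bullet> x) / S'"
    using assms(7,8) unfolding a_def b_def by (simp add: c field_simps)
  have "((mat 1 - outer K' H) ** M ** transpose (mat 1 - outer K H) + (mat 1 - outer K H) ** Q) *v x
      = (mat 1 - outer K' H) *v (M *v (x - (K \<bullet> x) *\<^sub>R H)) + (mat 1 - outer K H) *v (Q *v x)"
    by (simp add: matrix_vector_mul_assoc[symmetric] matrix_vector_mult_add_rdistrib transpose_diff
        transpose_outer matrix_vector_mult_diff_rdistrib)
  also have "\<dots> = M *v x + Q *v x - a *\<^sub>R v - b *\<^sub>R (v + q) - a *\<^sub>R q"
  proof -
    have M_step: "M *v (x - a *\<^sub>R H) = M *v x - a *\<^sub>R v"
      by (simp add: matrix_vector_mult_diff_distrib matrix_vector_mult_scaleR v_def)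
    have E'_step: "(mat 1 - outer K' H) *v (M *v x - a *\<^sub>R v) = M *v x - a *\<^sub>R v - b *\<^sub>R (v + q)"
      by (simp add: matrix_vector_mult_diff_rdistrib inner_diff_right HMx c_def[symmetric] flip: bvq)
    have E_step: "(mat 1 - outer K H) *v (Q *v x) = Q *v x - a *\<^sub>R q"
      by (simp add: matrix_vector_mult_diff_rdistrib HQx aq)
    show ?thesis
      unfolding Kx M_step E'_step E_step by (simp add: algebra_simps)
  qed
  also have "\<dots> = M *v x + Q *v x - (a + b) *\<^sub>R (v + q)"
    by (simp add: algebra_simps)
  also have "\<dots> = (M + Q - S' *\<^sub>R outer K' K') *v x"
    using assms(8) ab by (simp add: K' matrix_vector_mult_diff_rdistrib matrix_vector_mult_add_rdistrib
        scaleR_matrix_vector_assoc[symmetric] inner_add_left)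
  finally show "((mat 1 - outer K' H) ** M ** transpose (mat 1 - outer K H) + (mat 1 - outer K H) ** Q) *v x
      = (M + Q - S' *\<^sub>R outer K' K') *v x" .
qed

lemma comb_zero_left:
  "comb (0, m, P, e, J) (A, b, C, \<eta>, J') =
    (0, A *v (matrix_inv (mat 1 + P ** J') *v (m + P *v \<eta>)) + b,
     A ** matrix_inv (mat 1 + P ** J') ** P ** transpose A + C, e, J)"
  by (simp add: comb_def Let_def)

lemma comb_observed_step:
  fixes P Q F J :: "real^'n^'n" and H m e :: "real^'n" and s y :: real
  assumes "psd P" "psd Q" "s > 0"
  defines "S \<equiv> H \<bullet> (Q *v H) + s" and "P' \<equiv> F ** P ** transpose F + Q" and "G \<equiv> transpose F *v H"
  defines "S' \<equiv> H \<bullet> (P' *v H) + s" and "K \<equiv> (1 / S) *\<^sub>R (Q *v H)"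
  defines "K' \<equiv> (1 / S') *\<^sub>R (P' *v H)"
  shows "comb (0, m, P, e, J)
      ((mat 1 - outer K H) ** F, y *\<^sub>R K, (mat 1 - outer K H) ** Q, (y / S) *\<^sub>R G, (1 / S) *\<^sub>R outer G G)
    = (0, F *v m + (y - H \<bullet> (F *v m)) *\<^sub>R K', P' - S' *\<^sub>R outer K' K', e, J)"
proof -
  define M where "M = F ** P ** transpose F"
  define u where "u = P *v G"
  have sym: "transpose M = M" "transpose Q = Q"
    using assms(1,2) by (simp_all add: psd_def M_def matrix_transpose_mul matrix_mul_assoc)
  have G_inner: "G \<bullet> x = H \<bullet> (F *v x)" for x
    using dot_lmul_matrix[of H F x] by (simp add: G_def)
  have Fu: "F *v u = M *v H"
    by (simp add: u_def G_def M_def matrix_vector_mul_assoc matrix_mul_assoc del: transpose_matrix_vector)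
  have Gu: "G \<bullet> u = H \<bullet> (M *v H)"
    by (simp add: G_inner Fu)
  have "0 \<le> G \<bullet> u"
    using assms(1) by (simp add: psd_def u_def)
  then have S_pos: "S > 0" and S'_eq: "S' = S + G \<bullet> u" and S'_pos: "S' > 0"
    using assms(2,3)
    by (auto simp: psd_def S_def S'_def P'_def M_def[symmetric] Gu matrix_vector_mult_add_rdistrib
        inner_add_right add_nonneg_pos)
  have W: "matrix_inv (mat 1 + P ** ((1 / S) *\<^sub>R outer G G)) = mat 1 - (1 / S') *\<^sub>R outer u G"
  proof -
    have "P ** ((1 / S) *\<^sub>R outer G G) = outer ((1 / S) *\<^sub>R u) G"
      by (simp add: matrix_scalar_ac matrix_mul_outer outer_scaleR_left u_def scaleR_matrix_vector_assoc[symmetric])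
    moreover have "1 + G \<bullet> ((1 / S) *\<^sub>R u) = S' / S"
      using S_pos by (simp add: S'_eq field_simps)
    ultimately show ?thesis
      using S_pos S'_pos matrix_inv_rank_one_update[of G "(1 / S) *\<^sub>R u"]
      by (simp add: outer_scaleR_left)
  qed
  have FW: "F ** (mat 1 - (1 / S') *\<^sub>R outer u G) = (mat 1 - (1 / S') *\<^sub>R outer (M *v H) H) ** F"
    by (simp add: matrix_eq matrix_vector_mul_assoc[symmetric] matrix_vector_mult_diff_rdistrib
        matrix_vector_mult_diff_distrib scaleR_matrix_vector_assoc[symmetric] matrix_vector_mult_scaleR
        Fu G_inner)
  have gain: "(mat 1 - outer K H) ** (mat 1 - (1 / S') *\<^sub>R outer (M *v H) H) = mat 1 - outer K' H"
    using kalman_gain_composition[of H Q s M] S_pos S'_pos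
    by (simp add: S_def S'_def K_def K'_def P'_def M_def)
  have AW: "(mat 1 - outer K H) ** F ** matrix_inv (mat 1 + P ** ((1 / S) *\<^sub>R outer G G))
      = (mat 1 - outer K' H) ** F"
    unfolding W by (metis FW gain matrix_mul_assoc)
  have "(mat 1 - outer K' H) ** F *v (m + P *v ((y / S) *\<^sub>R G)) + y *\<^sub>R K
      = (mat 1 - outer K' H) *v (F *v m + (y / S) *\<^sub>R (M *v H)) + y *\<^sub>R K"
    by (simp add: matrix_vector_mul_assoc[symmetric] matrix_vector_right_distrib matrix_vector_mult_scaleR
        Fu[unfolded u_def])
  also have "\<dots> = F *v m + (y - H \<bullet> (F *v m)) *\<^sub>R K'"
    using kalman_mean_composition[of H Q s M "F *v m" y] S_pos S'_pos
    by (simp add: S_def S'_def K_def K'_def P'_def M_def)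
  finally have mean: "(mat 1 - outer K' H) ** F *v (m + P *v ((y / S) *\<^sub>R G)) + y *\<^sub>R K
      = F *v m + (y - H \<bullet> (F *v m)) *\<^sub>R K'" .
  have "(mat 1 - outer K' H) ** F ** P ** transpose ((mat 1 - outer K H) ** F) + (mat 1 - outer K H) ** Q
      = (mat 1 - outer K' H) ** M ** transpose (mat 1 - outer K H) + (mat 1 - outer K H) ** Q"
    by (simp add: M_def matrix_transpose_mul matrix_mul_assoc)
  also have "\<dots> = P' - S' *\<^sub>R outer K' K'"
    using kalman_covariance_composition[of M Q H s] sym S_pos S'_pos
    by (simp add: S_def S'_def K_def K'_def P'_def M_def)
  finally have cov: "(mat 1 - outer K' H) ** F ** P ** transpose ((mat 1 - outer K H) ** F)
      + (mat 1 - outer K H) ** Q = P' - S' *\<^sub>R outer K' K'" .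
  show ?thesis
    unfolding comb_zero_left matrix_vector_mul_assoc AW mean cov ..
qed

lemma elem_1_eq_kf_update:
  "elem Pinf F Q H obs y s2 1 = (case kf_update H obs y s2 1 (0, Pinf) of (m, P) \<Rightarrow> (0, m, P, 0, 0))"
  by (simp add: elem_def kf_update_def Let_def)

lemma comb_elem_eq_kf_step:
  assumes "2 \<le> k" "psd P" "psd (Q (k - 1))" "obs k \<Longrightarrow> s2 k > 0"
  shows "comb (0, m, P, e, J) (elem Pinf F Q H obs y s2 k) =
    (case kf_update H obs y s2 k (F (k - 1) *v m, F (k - 1) ** P ** transpose (F (k - 1)) + Q (k - 1))
     of (m', P') \<Rightarrow> (0, m', P', e, J))"
proof (cases "obs k")
  case True
  then show ?thesis
    using assms comb_observed_step[OF assms(2,3) assms(4)[OF True], where F = "F (k - 1)" and y = "y k"]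
    by (simp add: elem_def kf_update_def Let_def del: transpose_matrix_vector)
next
  case False
  then show ?thesis
    using assms(1) by (simp add: elem_def kf_update_def comb_zero_left matrix_inv_mat_1)
qed

lemma psd_kf_update:
  assumes "psd P" "obs k \<Longrightarrow> s2 k > 0"
  shows "psd (snd (kf_update H obs y s2 k (m, P)))"
  using assms psd_kalman_update[OF assms(1)] by (simp add: kf_update_def Let_def)

lemma prefix_eq_kalman:
  assumes "psd Pinf"
    and "\<And>k. 2 \<le> k \<Longrightarrow> k \<le> T \<Longrightarrow> psd (Q (k - 1))"
    and "\<And>k. 1 \<le> k \<Longrightarrow> k \<le> T \<Longrightarrow> obs k \<Longrightarrow> s2 k > 0"
    and "1 \<le> k" "k \<le> T"
  shows "prefix Pinf F Q H obs y s2 k =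
      (0, fst (kalman Pinf F Q H obs y s2 k), snd (kalman Pinf F Q H obs y s2 k), 0, 0)
    \<and> psd (snd (kalman Pinf F Q H obs y s2 k))"
  using assms(4,5)
proof (induction k rule: nat_induct_at_least)
  case base
  then have "obs 1 \<Longrightarrow> s2 1 > 0"
    using assms(3) by simp
  then show ?case
    using psd_kf_update[OF assms(1)] elem_1_eq_kf_update[of Pinf F Q H obs y s2]
    by (simp split: prod.splits)
next
  case (Suc k)
  obtain m P where kal: "kalman Pinf F Q H obs y s2 k = (m, P)"
    by fastforce
  have IH: "prefix Pinf F Q H obs y s2 k = (0, m, P, 0, 0)" "psd P"
    using Suc kal by auto
  have prefix: "prefix Pinf F Q H obs y s2 (Suc k) =
      comb (prefix Pinf F Q H obs y s2 k) (elem Pinf F Q H obs y s2 (Suc k))"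
    using Suc.hyps by (cases k) auto
  have kalman: "kalman Pinf F Q H obs y s2 (Suc k) =
      kf_update H obs y s2 (Suc k) (F k *v m, F k ** P ** transpose (F k) + Q k)"
    using Suc.hyps kal by simp
  have Q_psd: "psd (Q k)" and s2_pos: "obs (Suc k) \<Longrightarrow> s2 (Suc k) > 0"
    using assms(2)[of "Suc k"] assms(3)[of "Suc k"] Suc by auto
  have "comb (0, m, P, 0, 0) (elem Pinf F Q H obs y s2 (Suc k)) =
    (case kalman Pinf F Q H obs y s2 (Suc k) of (m', P') \<Rightarrow> (0, m', P', 0, 0))"
    unfolding kalman using comb_elem_eq_kf_step[of "Suc k" P Q obs s2] IH(2) Q_psd s2_pos Suc.hyps
    by simp
  moreover have "psd (snd (kalman Pinf F Q H obs y s2 (Suc k)))"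
    unfolding kalman using psd_congruence_add[OF IH(2) Q_psd] s2_pos by (rule psd_kf_update)
  ultimately show ?case
    unfolding prefix IH(1) by (simp split: prod.split)
qed

theorem proposition1:
  fixes Pinf :: "real^'n^'n" and F Q :: "nat \<Rightarrow> real^'n^'n" and H :: "real^'n"
    and obs :: "nat \<Rightarrow> bool" and y s2 :: "nat \<Rightarrow> real" and T :: nat
  assumes "psd Pinf"
    and "\<And>k. 2 \<le> k \<Longrightarrow> k \<le> T \<Longrightarrow> psd (Q (k - 1))"
    and "\<And>k. 1 \<le> k \<Longrightarrow> k \<le> T \<Longrightarrow> obs k \<Longrightarrow> s2 k > 0"
  shows "\<forall>k\<in>{1..T}.
           (case prefix Pinf F Q H obs y s2 k of (A, b, C, eta, J) \<Rightarrow>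
              kalman Pinf F Q H obs y s2 k = (b, C))"
  using prefix_eq_kalman[where Q = Q and ?s2.0 = s2, OF assms] by auto

end
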